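(* Let $\phi_1,\dots,\phi_m:\{0,1\}^{\mathbb Z^d}\to\{0,1\}$ be non-constant local monotone maps and suppose there is a linear polar function $\mathcal L:\mathbb R^d\to\mathbb R^\sigma$ of dimension $\sigma\ge2$ with $\sum_{s=1}^\sigma\inf_{1\le k\le m}\varepsilon_{\phi_k}(\mathcal L_s)>0$. Then there exist a linear polar function $\mathcal L':\mathbb R^d\to\mathbb R^{\sigma'}$ of dimension $\sigma'\ge2$ and a vector $v\in\mathbb R^d$ such that $\varepsilon^v_{\phi_k}(\mathcal L'_s)>0$ for all $1\le s\le\sigma'$ and $1\le k\le m$.
   Context: A map $\phi:\{0,1\}^{\mathbb Z^d}\to\{0,1\}$ is local if it depends on finitely many coordinates and monotone if $x\le y$ implies $\phi(x)\le\phi(y)$. A minimal one-set of $\phi$ is a finite $A\subset\mathbb Z^d$ with $\phi(1_A)=1$ such that no proper subset has this property; $\mathcal A(\phi)$ is the set of minimal one-sets. A linear polar function of dimension $\sigma$ is a linear map $\mathcal L:\mathbb R^d\to\mathbb R^\sigma$ with $\sum_{s=1}^\sigma\mathcal L_s(z)=0$ for all $z$. For a linear form $\ell$ and $v\in\mathbb R^d$, the edge speed is $\varepsilon_\phi(\ell):=\sup_{A\in\mathcal A(\phi)}\inf_{i\in A}\ell(i)$ and the compensated edge speed is $\varepsilon^v_\phi(\ell):=\sup_{A\in\mathcal A(\phi)}\inf_{i\in A}\ell(i-v)$. *)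

theory Defs
  imports "HOL-Analysis.Analysis"
begin

text \<open>Configurations in {0,1}^(Z^d) are modelled as functions int^'d => bool
  (True = 1). A map phi : {0,1}^(Z^d) -> {0,1} is a predicate on configurations.\<close>

type_synonym 'd config = "int^'d \<Rightarrow> bool"

definition local_map :: "('d::finite config \<Rightarrow> bool) \<Rightarrow> bool" where
  "local_map \<phi> \<longleftrightarrow> (\<exists>U. finite U \<and> (\<forall>x y. (\<forall>i\<in>U. x i = y i) \<longrightarrow> \<phi> x = \<phi> y))"

definition monotone_map :: "('d::finite config \<Rightarrow> bool) \<Rightarrow> bool" where
  "monotone_map \<phi> \<longleftrightarrow> (\<forall>x y. x \<le> y \<longrightarrow> \<phi> x \<le> \<phi> y)"

definition nonconstant_map :: "('d::finite config \<Rightarrow> bool) \<Rightarrow> bool" where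
  "nonconstant_map \<phi> \<longleftrightarrow> (\<exists>x y. \<phi> x \<noteq> \<phi> y)"

definition indic :: "(int^'d) set \<Rightarrow> 'd config" where
  "indic A = (\<lambda>i. i \<in> A)"

definition min_one_sets :: "('d::finite config \<Rightarrow> bool) \<Rightarrow> (int^'d) set set" where
  "min_one_sets \<phi> = {A. finite A \<and> \<phi> (indic A) \<and> (\<forall>B. B \<subset> A \<longrightarrow> \<not> \<phi> (indic B))}"

definition vec_of_int :: "int^'d \<Rightarrow> real^'d" where
  "vec_of_int i = (\<chi> j. real_of_int (i $ j))"

definition linear_polar :: "nat \<Rightarrow> (nat \<Rightarrow> real^'d::finite \<Rightarrow> real) \<Rightarrow> bool" where
  "linear_polar \<sigma> L \<longleftrightarrow> (\<forall>s<\<sigma>. linear (L s)) \<and> (\<forall>z. (\<Sum>s<\<sigma>. L s z) = 0)"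

definition edge_speed :: "('d::finite config \<Rightarrow> bool) \<Rightarrow> (real^'d \<Rightarrow> real) \<Rightarrow> real" where
  "edge_speed \<phi> l = (SUP A\<in>min_one_sets \<phi>. INF i\<in>A. l (vec_of_int i))"

definition comp_edge_speed :: "real^'d \<Rightarrow> ('d::finite config \<Rightarrow> bool) \<Rightarrow> (real^'d \<Rightarrow> real) \<Rightarrow> real" where
  "comp_edge_speed v \<phi> l = (SUP A\<in>min_one_sets \<phi>. INF i\<in>A. l (vec_of_int i - v))"

end

theory Submission
  imports Defs
begin

text \<open>Write \<open>b s = inf\<^sub>k \<epsilon>\<^sub>\<phi>\<^sub>k(L\<^sub>s)\<close>. If some \<open>v\<close> satisfies \<open>L\<^sub>s(v) < b s\<close> for all \<open>s\<close>,
  then \<open>\<epsilon>\<^sup>v\<^sub>\<phi>\<^sub>k(L\<^sub>s) = \<epsilon>\<^sub>\<phi>\<^sub>k(L\<^sub>s) - L\<^sub>s(v) > 0\<close> and we are done. Otherwise, by a theorem of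
  the alternative (proved by separating a point from a polytope), there are weights
  \<open>\<mu> \<ge> 0\<close>, not all zero, with \<open>\<Sum>\<^sub>s \<mu>\<^sub>s L\<^sub>s = 0\<close> and \<open>\<Sum>\<^sub>s \<mu>\<^sub>s b s \<le> 0\<close>. With \<open>M = max \<mu>\<close>,
  the functions \<open>(M - \<mu>\<^sub>s) L\<^sub>s\<close> again form a linear polar function, whose speeds still
  have positive sum because edge speeds are positively homogeneous, and at least one
  of its components vanishes. Dropping the vanishing components lowers the
  dimension, so induction on \<open>\<sigma>\<close> concludes; positivity of the sum keeps the
  dimension at least 2.\<close>

lemma convex_hull_finite_image:
  fixes p :: "'b \<Rightarrow> 'a::real_vector"
  assumes "finite I" "x \<in> convex hull (p ` I)"
  obtains c where "\<forall>i\<in>I. 0 \<le> c i" "sum c I = 1" "(\<Sum>i\<in>I. c i *\<^sub>R p i) = x"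
proof -
  have "p ` I = (\<Union>i\<in>I. {p i})" by blast
  with assms show ?thesis
    using that convex_hull_finite_union[of I "\<lambda>i. {p i}"] by auto
qed

lemma linear_inequalities_alternative:
  fixes f :: "nat \<Rightarrow> 'a::euclidean_space \<Rightarrow> real"
  assumes lin: "\<forall>s<n. linear (f s)" and infeasible: "\<nexists>v. \<forall>s<n. f s v < b s"
  shows "\<exists>\<mu>. (\<forall>s<n. 0 \<le> \<mu> s) \<and> 0 < (\<Sum>s<n. \<mu> s) \<and>
    (\<forall>z. (\<Sum>s<n. \<mu> s * f s z) = 0) \<and> (\<Sum>s<n. \<mu> s * b s) \<le> 0"
proof -
  define a where "a s = adjoint (f s) 1" for s
  have fa: "f s z = z \<bullet> a s" if "s < n" for s z
    using adjoint_works[of "f s" z 1] lin that by (simp add: a_def)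
  text \<open>The extra point \<open>(0, 1)\<close> forces the separating functional to weigh the second
    coordinate positively.\<close>
  define p where "p s = (if s < n then (a s, b s) else (0, 1))" for s
  have "0 \<in> convex hull (p ` {..n})"
  proof (rule ccontr)
    assume "0 \<notin> convex hull (p ` {..n})"
    then obtain w \<beta> where w: "w \<bullet> 0 < \<beta>" "\<forall>x\<in>convex hull (p ` {..n}). \<beta> < w \<bullet> x"
      using separating_hyperplane_closed_point[OF convex_convex_hull
          compact_imp_closed[OF finite_imp_compact_convex_hull]] by blast
    obtain w1 r where w1r: "w = (w1, r)" by fastforce
    have above: "\<beta> < w \<bullet> p s" if "s \<le> n" for s
      using w(2) that by (auto intro: hull_inc)
    have "0 < r" using above[of n] w(1) by (simp add: p_def w1r)
    have "f s (- (1 / r) *\<^sub>R w1) < b s" if "s < n" for s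
    proof -
      have "0 < w1 \<bullet> a s + r * b s" using above[of s] w(1) that by (simp add: p_def w1r)
      with \<open>0 < r\<close> show ?thesis
        using that by (simp add: fa inner_commute field_simps)
    qed
    with infeasible show False by blast
  qed
  then obtain c where c: "\<forall>s\<in>{..n}. 0 \<le> c s" "(\<Sum>s\<le>n. c s) = 1" "(\<Sum>s\<le>n. c s *\<^sub>R p s) = 0"
    by (rule convex_hull_finite_image[OF finite_atMost])
  then have "(\<Sum>s<n. c s *\<^sub>R (a s, b s)) + c n *\<^sub>R (0, 1) = 0"
    by (simp add: lessThan_Suc_atMost[symmetric] p_def)
  then have weighted_a: "(\<Sum>s<n. c s *\<^sub>R a s) = 0" and weighted_b: "(\<Sum>s<n. c s * b s) = - c n"
    by (simp_all add: prod_eq_iff fst_sum snd_sum)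
  have nonneg: "\<forall>s<n. 0 \<le> c s" using c(1) by simp
  show ?thesis
  proof (intro exI conjI)
    show "\<forall>s<n. 0 \<le> c s" by (fact nonneg)
    show "0 < (\<Sum>s<n. c s)"
    proof (rule ccontr)
      assume "\<not> 0 < (\<Sum>s<n. c s)"
      moreover have "0 \<le> (\<Sum>s<n. c s)" using nonneg by (intro sum_nonneg) auto
      ultimately have "(\<Sum>s<n. c s) = 0" by linarith
      with nonneg have "\<forall>s<n. c s = 0" using sum_nonneg_eq_0_iff[of "{..<n}" c] by auto
      then show False using weighted_b c(2) by (simp add: lessThan_Suc_atMost[symmetric])
    qed
    show "\<forall>z. (\<Sum>s<n. c s * f s z) = 0"
    proof
      fix z
      show "(\<Sum>s<n. c s * f s z) = 0"
        using arg_cong[OF weighted_a, of "\<lambda>y. z \<bullet> y"] by (simp add: fa inner_sum_right)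
    qed
    show "(\<Sum>s<n. c s * b s) \<le> 0" using weighted_b c(1) by simp
  qed
qed

definition positively_homogeneous :: "(('a \<Rightarrow> real) \<Rightarrow> real) \<Rightarrow> bool" where
  "positively_homogeneous B \<longleftrightarrow> (\<forall>c l. 0 \<le> c \<longrightarrow> B (\<lambda>z. c * l z) = c * B l)"

lemma positively_homogeneous_zero:
  assumes "positively_homogeneous B"
  shows "B (\<lambda>z. 0) = 0"
  using assms[unfolded positively_homogeneous_def, rule_format, of 0 "\<lambda>z. 0"] by simp

lemma linear_polar_reweight:
  assumes "linear_polar \<sigma> L" "\<forall>z. (\<Sum>s<\<sigma>. \<mu> s * L s z) = 0"
  shows "linear_polar \<sigma> (\<lambda>s z. (M - \<mu> s) * L s z)"
  unfolding linear_polar_def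
proof (intro conjI allI impI)
  show "linear (\<lambda>z. (M - \<mu> s) * L s z)" if "s < \<sigma>" for s
    using assms that unfolding linear_polar_def
    by (simp add: linear_compose_scale_right flip: real_scaleR_def)
  show "(\<Sum>s<\<sigma>. (M - \<mu> s) * L s z) = 0" for z
  proof -
    have "(\<Sum>s<\<sigma>. (M - \<mu> s) * L s z) = M * (\<Sum>s<\<sigma>. L s z) - (\<Sum>s<\<sigma>. \<mu> s * L s z)"
      by (simp add: left_diff_distrib sum_subtractf sum_distrib_left)
    with assms show ?thesis unfolding linear_polar_def by simp
  qed
qed

lemma linear_polar_remove_zero_components:
  fixes L :: "nat \<Rightarrow> real^'d::finite \<Rightarrow> real"
  assumes L: "linear_polar \<sigma> L" and S: "S \<subseteq> {..<\<sigma>}"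
    and zero: "\<forall>s\<in>{..<\<sigma>} - S. L s = (\<lambda>z. 0)"
  shows "\<exists>L'. linear_polar (card S) L' \<and>
    (\<forall>g :: (real^'d \<Rightarrow> real) \<Rightarrow> real. g (\<lambda>z. 0) = 0 \<longrightarrow> (\<Sum>j<card S. g (L' j)) = (\<Sum>s<\<sigma>. g (L s)))"
proof -
  obtain h where h: "bij_betw h {..<card S} S"
    using ex_bij_betw_nat_finite[of S] finite_subset[OF S] by (auto simp: atLeast0LessThan)
  have sum_eq: "(\<Sum>j<card S. g (L (h j))) = (\<Sum>s<\<sigma>. g (L s))" if "g (\<lambda>z. 0) = 0" for g
  proof -
    have "(\<Sum>j<card S. g (L (h j))) = (\<Sum>s\<in>S. g (L s))"
      using sum.reindex_bij_betw[OF h, of "\<lambda>s. g (L s)"] .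
    also have "\<dots> = (\<Sum>s<\<sigma>. g (L s))"
      by (rule sum.mono_neutral_left) (use S zero that in auto)
    finally show ?thesis .
  qed
  have "linear_polar (card S) (\<lambda>j. L (h j))"
    unfolding linear_polar_def
  proof (intro conjI allI impI)
    fix j assume "j < card S"
    then have "h j < \<sigma>" using h S by (auto simp: bij_betw_def)
    then show "linear (L (h j))" using L by (simp add: linear_polar_def)
  next
    show "(\<Sum>j<card S. L (h j) z) = 0" for z
      using sum_eq[of "\<lambda>l. l z"] L by (simp add: linear_polar_def)
  qed
  with sum_eq show ?thesis by blast
qed

lemma linear_polar_dim_ge_2:
  fixes B :: "(real^'d::finite \<Rightarrow> real) \<Rightarrow> real"
  assumes L: "linear_polar \<sigma> L" and "B (\<lambda>z. 0) = 0" and pos: "0 < (\<Sum>s<\<sigma>. B (L s))"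
  shows "2 \<le> \<sigma>"
proof (rule ccontr)
  assume "\<not> 2 \<le> \<sigma>"
  then consider "\<sigma> = 0" | "\<sigma> = 1" by linarith
  then show False
  proof cases
    case 1
    with pos show False by simp
  next
    case 2
    then have "L 0 = (\<lambda>z. 0)" using L by (auto simp: linear_polar_def)
    with 2 assms(2) pos show False by simp
  qed
qed

lemma exists_maximal_positive_term:
  fixes \<mu> :: "nat \<Rightarrow> real"
  assumes "0 < (\<Sum>s<\<sigma>. \<mu> s)"
  shows "\<exists>s0<\<sigma>. 0 < \<mu> s0 \<and> (\<forall>s<\<sigma>. \<mu> s \<le> \<mu> s0)"
proof -
  have "{..<\<sigma>} \<noteq> {}" using assms by auto
  then have "Max (\<mu> ` {..<\<sigma>}) \<in> \<mu> ` {..<\<sigma>}" by (intro Max_in) auto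
  then obtain s0 where s0: "s0 < \<sigma>" "\<mu> s0 = Max (\<mu> ` {..<\<sigma>})" by auto
  then have le: "\<forall>s<\<sigma>. \<mu> s \<le> \<mu> s0" by simp
  have "\<not> \<mu> s0 \<le> 0"
  proof
    assume "\<mu> s0 \<le> 0"
    with le have "(\<Sum>s<\<sigma>. \<mu> s) \<le> 0" by (intro sum_nonpos) auto
    with assms show False by simp
  qed
  with s0(1) le show ?thesis by auto
qed

lemma linear_polar_reduce:
  fixes L :: "nat \<Rightarrow> real^'d::finite \<Rightarrow> real"
  assumes B: "positively_homogeneous B" and L: "linear_polar \<sigma> L"
    and pos: "0 < (\<Sum>s<\<sigma>. B (L s))"
    and \<mu>: "\<forall>s<\<sigma>. 0 \<le> \<mu> s" "0 < (\<Sum>s<\<sigma>. \<mu> s)"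
      "\<forall>z. (\<Sum>s<\<sigma>. \<mu> s * L s z) = 0" "(\<Sum>s<\<sigma>. \<mu> s * B (L s)) \<le> 0"
  shows "\<exists>\<sigma>'<\<sigma>. \<exists>L'. linear_polar \<sigma>' L' \<and> 0 < (\<Sum>s<\<sigma>'. B (L' s))"
proof -
  obtain s0 where s0: "s0 < \<sigma>" "0 < \<mu> s0" and le_M: "\<And>s. s < \<sigma> \<Longrightarrow> \<mu> s \<le> \<mu> s0"
    using exists_maximal_positive_term[OF \<mu>(2)] by blast
  define M where "M = \<mu> s0"
  have "0 < M" using s0(2) by (simp add: M_def)
  define L'' where "L'' = (\<lambda>s z. (M - \<mu> s) * L s z)"
  define S where "S = {s\<in>{..<\<sigma>}. \<mu> s < M}"
  have "linear_polar \<sigma> L''"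
    unfolding L''_def by (rule linear_polar_reweight[OF L \<mu>(3)])
  moreover have "S \<subseteq> {..<\<sigma>}" by (auto simp: S_def)
  moreover have "\<forall>s\<in>{..<\<sigma>} - S. L'' s = (\<lambda>z. 0)"
  proof
    fix s assume "s \<in> {..<\<sigma>} - S"
    then have "\<mu> s = M" using le_M[of s] by (simp add: S_def M_def)
    then show "L'' s = (\<lambda>z. 0)" by (simp add: L''_def)
  qed
  ultimately obtain L' where L': "linear_polar (card S) L'"
    "\<forall>g :: (real^'d \<Rightarrow> real) \<Rightarrow> real. g (\<lambda>z. 0) = 0 \<longrightarrow>
      (\<Sum>j<card S. g (L' j)) = (\<Sum>s<\<sigma>. g (L'' s))"
    using linear_polar_remove_zero_components by blast
  have "S \<subset> {..<\<sigma>}" using s0 unfolding S_def M_def by auto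
  then have "card S < \<sigma>" by (metis card_lessThan finite_lessThan psubset_card_mono)
  have "(\<Sum>s<\<sigma>. B (L'' s)) = (\<Sum>s<\<sigma>. (M - \<mu> s) * B (L s))"
    using B le_M by (intro sum.cong) (auto simp: L''_def M_def positively_homogeneous_def)
  also have "\<dots> = M * (\<Sum>s<\<sigma>. B (L s)) - (\<Sum>s<\<sigma>. \<mu> s * B (L s))"
    by (simp add: left_diff_distrib sum_subtractf sum_distrib_left)
  also have "\<dots> > 0" using mult_pos_pos[OF \<open>0 < M\<close> pos] \<mu>(4) by linarith
  finally have "0 < (\<Sum>j<card S. B (L' j))"
    using L'(2) positively_homogeneous_zero[OF B] by simp
  with L'(1) \<open>card S < \<sigma>\<close> show ?thesis by blast
qed

lemma linear_polar_strict_solution: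
  fixes B :: "(real^'d::finite \<Rightarrow> real) \<Rightarrow> real"
  assumes B: "positively_homogeneous B"
  shows "linear_polar \<sigma> L \<Longrightarrow> 0 < (\<Sum>s<\<sigma>. B (L s)) \<Longrightarrow>
    \<exists>\<sigma>' L' v. 2 \<le> \<sigma>' \<and> linear_polar \<sigma>' L' \<and> (\<forall>s<\<sigma>'. L' s v < B (L' s))"
proof (induction \<sigma> arbitrary: L rule: less_induct)
  case (less \<sigma> L)
  show ?case
  proof (cases "\<exists>v. \<forall>s<\<sigma>. L s v < B (L s)")
    case True
    moreover have "2 \<le> \<sigma>"
      using linear_polar_dim_ge_2 less.prems positively_homogeneous_zero[OF B] by blast
    ultimately show ?thesis using less.prems(1) by blast
  next
    case False
    then obtain \<mu> where "\<forall>s<\<sigma>. 0 \<le> \<mu> s" "0 < (\<Sum>s<\<sigma>. \<mu> s)"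
      "\<forall>z. (\<Sum>s<\<sigma>. \<mu> s * L s z) = 0" "(\<Sum>s<\<sigma>. \<mu> s * B (L s)) \<le> 0"
      using linear_inequalities_alternative[of \<sigma> L "\<lambda>s. B (L s)"] less.prems(1)
      by (auto simp: linear_polar_def)
    then obtain \<sigma>' L' where "\<sigma>' < \<sigma>" "linear_polar \<sigma>' L'" "0 < (\<Sum>s<\<sigma>'. B (L' s))"
      using linear_polar_reduce[OF B less.prems] by blast
    then show ?thesis using less.IH by blast
  qed
qed

definition nondegenerate_map :: "('d::finite config \<Rightarrow> bool) \<Rightarrow> bool" where
  "nondegenerate_map \<phi> \<longleftrightarrow> finite (min_one_sets \<phi>) \<and> min_one_sets \<phi> \<noteq> {} \<and> {} \<notin> min_one_sets \<phi>"

lemma min_one_sets_subset_support: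
  assumes "\<And>x y. (\<forall>i\<in>U. x i = y i) \<Longrightarrow> \<phi> x = \<phi> y" and "A \<in> min_one_sets \<phi>"
  shows "A \<subseteq> U"
proof (rule ccontr)
  assume "\<not> A \<subseteq> U"
  then have "A \<inter> U \<subset> A" by blast
  moreover have "\<phi> (indic (A \<inter> U)) = \<phi> (indic A)" by (rule assms(1)) (simp add: indic_def)
  ultimately show False using assms(2) unfolding min_one_sets_def by auto
qed

lemma finite_min_one_sets:
  assumes "local_map \<phi>"
  shows "finite (min_one_sets \<phi>)"
proof -
  obtain U where "finite U" "\<And>x y. (\<forall>i\<in>U. x i = y i) \<Longrightarrow> \<phi> x = \<phi> y"
    using assms unfolding local_map_def by blast
  then show ?thesis
    using min_one_sets_subset_support by (metis Pow_iff finite_Pow_iff finite_subset subsetI)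
qed

lemma min_one_sets_nonempty:
  assumes "local_map \<phi>" "nonconstant_map \<phi>"
  shows "min_one_sets \<phi> \<noteq> {}"
proof -
  obtain U where U: "finite U" "\<And>x y. (\<forall>i\<in>U. x i = y i) \<Longrightarrow> \<phi> x = \<phi> y"
    using assms(1) unfolding local_map_def by blast
  obtain x where "\<phi> x" using assms(2) unfolding nonconstant_map_def by (metis (full_types))
  moreover have "\<phi> (indic (U \<inter> {i. x i})) = \<phi> x" by (rule U(2)) (simp add: indic_def)
  ultimately have "U \<inter> {i. x i} \<in> {B. B \<subseteq> U \<and> \<phi> (indic B)}" by simp
  then obtain A where A: "A \<in> {B. B \<subseteq> U \<and> \<phi> (indic B)}"
    and minimal: "\<And>B. (B, A) \<in> finite_psubset \<Longrightarrow> B \<notin> {B. B \<subseteq> U \<and> \<phi> (indic B)}"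
    by (rule wfE_min[OF wf_finite_psubset]) blast
  have "finite A" using A U(1) finite_subset by blast
  with A minimal have "A \<in> min_one_sets \<phi>"
    unfolding min_one_sets_def finite_psubset_def by blast
  then show ?thesis by blast
qed

lemma empty_notin_min_one_sets:
  assumes "monotone_map \<phi>" "nonconstant_map \<phi>"
  shows "{} \<notin> min_one_sets \<phi>"
proof
  assume "{} \<in> min_one_sets \<phi>"
  then have "\<phi> (indic {})" unfolding min_one_sets_def by simp
  moreover have "\<phi> (indic {}) \<le> \<phi> y" for y
  proof -
    have "indic {} \<le> y" by (simp add: indic_def le_fun_def)
    with assms(1) show ?thesis unfolding monotone_map_def by blast
  qed
  ultimately have "\<phi> y" for y by simp
  with assms(2) show False unfolding nonconstant_map_def by blast
qed

lemma nondegenerate_mapI: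
  assumes "nonconstant_map \<phi>" "local_map \<phi>" "monotone_map \<phi>"
  shows "nondegenerate_map \<phi>"
  using assms finite_min_one_sets min_one_sets_nonempty empty_notin_min_one_sets
  unfolding nondegenerate_map_def by blast

lemma mono_INF_commute_finite:
  fixes g :: "'a::conditionally_complete_linorder \<Rightarrow> 'b::conditionally_complete_linorder"
  assumes "mono g" "finite A" "A \<noteq> {}"
  shows "(INF i\<in>A. g (f i)) = g (INF i\<in>A. f i)"
  using assms by (simp add: cInf_eq_Min mono_Min_commute image_image)

lemma mono_SUP_commute_finite:
  fixes g :: "'a::conditionally_complete_linorder \<Rightarrow> 'b::conditionally_complete_linorder"
  assumes "mono g" "finite A" "A \<noteq> {}"
  shows "(SUP i\<in>A. g (f i)) = g (SUP i\<in>A. f i)"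
  using assms by (simp add: cSup_eq_Max mono_Max_commute image_image)

lemma mono_SUP_INF_commute_min_one_sets:
  fixes g :: "real \<Rightarrow> real"
  assumes "nondegenerate_map \<phi>" "mono g"
  shows "(SUP A\<in>min_one_sets \<phi>. INF i\<in>A. g (f i)) = g (SUP A\<in>min_one_sets \<phi>. INF i\<in>A. f i)"
proof -
  have "(INF i\<in>A. g (f i)) = g (INF i\<in>A. f i)" if "A \<in> min_one_sets \<phi>" for A
    using that assms by (intro mono_INF_commute_finite) (auto simp: nondegenerate_map_def min_one_sets_def)
  then have "(SUP A\<in>min_one_sets \<phi>. INF i\<in>A. g (f i)) = (SUP A\<in>min_one_sets \<phi>. g (INF i\<in>A. f i))"
    by (rule SUP_cong[OF refl])
  also have "\<dots> = g (SUP A\<in>min_one_sets \<phi>. INF i\<in>A. f i)"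
    using assms by (intro mono_SUP_commute_finite) (auto simp: nondegenerate_map_def)
  finally show ?thesis .
qed

lemma comp_edge_speed_eq:
  assumes "nondegenerate_map \<phi>" "linear l"
  shows "comp_edge_speed v \<phi> l = edge_speed \<phi> l - l v"
  using mono_SUP_INF_commute_min_one_sets[OF assms(1), of "\<lambda>x. x - l v" "\<lambda>i. l (vec_of_int i)"]
  unfolding comp_edge_speed_def edge_speed_def
  by (simp add: linear_diff[OF assms(2)] mono_def)

lemma edge_speed_scale:
  assumes "nondegenerate_map \<phi>" "0 \<le> c"
  shows "edge_speed \<phi> (\<lambda>z. c * l z) = c * edge_speed \<phi> l"
  using mono_SUP_INF_commute_min_one_sets[OF assms(1), of "\<lambda>x. c * x" "\<lambda>i. l (vec_of_int i)"]
  unfolding edge_speed_def by (simp add: assms(2) mono_def mult_left_mono)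

lemma positively_homogeneous_INF_edge_speed:
  fixes \<phi> :: "nat \<Rightarrow> 'd::finite config \<Rightarrow> bool"
  assumes "0 < m" "\<forall>k<m. nondegenerate_map (\<phi> k)"
  shows "positively_homogeneous (\<lambda>l. INF k\<in>{..<m}. edge_speed (\<phi> k) l)"
  unfolding positively_homogeneous_def
proof (intro allI impI)
  fix c :: real and l :: "real^'d \<Rightarrow> real"
  assume "0 \<le> c"
  then have "(INF k\<in>{..<m}. edge_speed (\<phi> k) (\<lambda>z. c * l z)) = (INF k\<in>{..<m}. c * edge_speed (\<phi> k) l)"
    using assms(2) by (intro INF_cong) (auto simp: edge_speed_scale)
  also have "\<dots> = c * (INF k\<in>{..<m}. edge_speed (\<phi> k) l)"
    using \<open>0 \<le> c\<close> assms(1) by (intro mono_INF_commute_finite) (auto simp: mono_def mult_left_mono)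
  finally show "(INF k\<in>{..<m}. edge_speed (\<phi> k) (\<lambda>z. c * l z)) = c * (INF k\<in>{..<m}. edge_speed (\<phi> k) l)" .
qed

theorem mainTheorem6:
  fixes \<phi> :: "nat \<Rightarrow> 'd::finite config \<Rightarrow> bool"
    and m \<sigma> :: nat and L :: "nat \<Rightarrow> real^'d \<Rightarrow> real"
  assumes "m \<ge> 1"
    and "\<forall>k<m. nonconstant_map (\<phi> k) \<and> local_map (\<phi> k) \<and> monotone_map (\<phi> k)"
    and "\<sigma> \<ge> 2" and "linear_polar \<sigma> L"
    and "(\<Sum>s<\<sigma>. INF k\<in>{..<m}. edge_speed (\<phi> k) (L s)) > 0"
  shows "\<exists>\<sigma>' (L' :: nat \<Rightarrow> real^'d \<Rightarrow> real) (v :: real^'d).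
           \<sigma>' \<ge> 2 \<and> linear_polar \<sigma>' L' \<and>
           (\<forall>s<\<sigma>'. \<forall>k<m. comp_edge_speed v (\<phi> k) (L' s) > 0)"
proof -
  define B where "B l = (INF k\<in>{..<m}. edge_speed (\<phi> k) l)" for l
  have nondeg: "\<forall>k<m. nondegenerate_map (\<phi> k)"
    using assms(2) by (blast intro: nondegenerate_mapI)
  have "positively_homogeneous B"
    unfolding B_def using assms(1) nondeg by (intro positively_homogeneous_INF_edge_speed) auto
  then obtain \<sigma>' L' v where L': "2 \<le> \<sigma>'" "linear_polar \<sigma>' L'" "\<forall>s<\<sigma>'. L' s v < B (L' s)"
    using linear_polar_strict_solution assms(4,5) unfolding B_def by blast
  have "0 < comp_edge_speed v (\<phi> k) (L' s)" if "s < \<sigma>'" "k < m" for s k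
  proof -
    have "linear (L' s)" using L'(2) that(1) by (simp add: linear_polar_def)
    then have "comp_edge_speed v (\<phi> k) (L' s) = edge_speed (\<phi> k) (L' s) - L' s v"
      using nondeg that(2) by (simp add: comp_edge_speed_eq)
    moreover have "B (L' s) \<le> edge_speed (\<phi> k) (L' s)"
      unfolding B_def using that(2) by (intro cINF_lower) auto
    moreover have "L' s v < B (L' s)" using L'(3) that(1) by blast
    ultimately show ?thesis by linarith
  qed
  with L'(1,2) show ?thesis by blast
qed

end
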